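(* For all $n\ge 1$, $\left|\mathrm{Av}_n[\overline{14}23]\right|=C_{n-1}$, where $C_m=\frac{1}{m+1}\binom{2m}{m}$ is the $m$th Catalan number.
   Context: For $\sigma\in S_n$, the cyclic permutation $[\sigma]$ is the set of all rotations of $\sigma$; $[S_n]$ is the set of cyclic permutations of length $n$. $[\sigma]$ contains the vincular pattern $[\overline{14}23]$ if some rotation of $\sigma$ has entries $a,b,c,d$ appearing in this order with $a,b$ adjacent and $a<c<d<b$; $\mathrm{Av}_n[\overline{14}23]$ is the set of $[\sigma]\in[S_n]$ not containing it. *)

theory Defs
  imports Complex_Main
begin

definition perms :: "nat \<Rightarrow> nat list set" where
  "perms n = {xs. distinct xs \<and> set xs = {1..n}}"

definition cyc :: "nat list \<Rightarrow> nat list set" where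
  "cyc xs = {rotate k xs | k. k < length xs}"

definition cyc_perms :: "nat \<Rightarrow> nat list set set" where
  "cyc_perms n = cyc ` perms n"

text \<open>A linear permutation contains the vincular pattern 14-23 with 1,4 adjacent:
  entries a = t!i, b = t!(i+1), c = t!j, d = t!k with i+1 < j < k and a < c < d < b.\<close>
definition contains_1423_lin :: "nat list \<Rightarrow> bool" where
  "contains_1423_lin t \<longleftrightarrow> (\<exists>i j k. Suc i < j \<and> j < k \<and> k < length t \<and>
      t ! i < t ! j \<and> t ! j < t ! k \<and> t ! k < t ! Suc i)"

definition contains_1423 :: "nat list set \<Rightarrow> bool" where
  "contains_1423 C \<longleftrightarrow> (\<exists>t\<in>C. contains_1423_lin t)"

definition Av_1423 :: "nat \<Rightarrow> nat list set set" where
  "Av_1423 n = {C \<in> cyc_perms n. \<not> contains_1423 C}"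

definition catalan :: "nat \<Rightarrow> real" where
  "catalan m = (1 / (real m + 1)) * real ((2 * m) choose m)"

end

(* Rotate every cyclic permutation so that it starts with 1. Call the entries following an entry,
   read cyclically, its cyclic continuation. For an entry a whose cyclic successor is b, an
   occurrence of 14-23 with a and b in the roles of 1 and 4 exists iff the entries strictly between
   a and b do not appear in decreasing order in the cyclic continuation of b.

   Inserting the new maximum n + 1 directly after an entry x preserves avoidance iff x is active:
   the entries larger than x appear in decreasing order in the cyclic continuation of x. The active
   entries after the insertion are n + 1 and the old active entries >= x, so a node with k active
   entries has children with 2, ..., k + 1 active entries. In this generating tree rooted at [1],
   level m is counted by ballot numbers and has the Catalan number C_m of nodes. *)

theory Submission
  imports Defs
begin

section \<open>Cyclic continuations and insertion into lists\<close>

definition cyc_after :: "'a list \<Rightarrow> 'a \<Rightarrow> 'a list" where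
  "cyc_after t a = tl (dropWhile (\<lambda>z. z \<noteq> a) t) @ takeWhile (\<lambda>z. z \<noteq> a) t"

lemma cyc_after_split:
  assumes "a \<notin> set u"
  shows "cyc_after (u @ a # v) a = v @ u"
proof -
  have "takeWhile (\<lambda>z. z \<noteq> a) (u @ a # v) = u" "dropWhile (\<lambda>z. z \<noteq> a) (u @ a # v) = a # v"
    using assms by (induction u) auto
  then show ?thesis by (simp add: cyc_after_def)
qed

lemma cyc_after_Cons [simp]: "a \<notin> set v \<Longrightarrow> cyc_after (a # v) a = v"
  using cyc_after_split[of a "[]"] by simp

lemma
  assumes "distinct t" "a \<in> set t"
  shows set_cyc_after: "set (cyc_after t a) = set t - {a}"
    and distinct_cyc_after: "distinct (cyc_after t a)"
proof -
  obtain u v where "t = u @ a # v" using split_list[OF assms(2)] by blast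
  with assms show "set (cyc_after t a) = set t - {a}" "distinct (cyc_after t a)"
    by (auto simp: cyc_after_split)
qed

lemma cyc_after_rotate1:
  assumes "distinct t" "a \<in> set t"
  shows "cyc_after (rotate1 t) a = cyc_after t a"
proof (cases t)
  case (Cons b w)
  show ?thesis
  proof (cases "a = b")
    case False
    then obtain u v where "w = u @ a # v" using assms Cons split_list by fastforce
    with assms Cons show ?thesis
      using cyc_after_split[of a "b # u" v] cyc_after_split[of a u "v @ [b]"] by auto
  qed (use assms Cons cyc_after_split[of a w "[]"] in auto)
qed (use assms in simp)

lemma cyc_after_rotate:
  "distinct t \<Longrightarrow> a \<in> set t \<Longrightarrow> cyc_after (rotate k t) a = cyc_after t a"
  by (induction k) (simp_all add: cyc_after_rotate1)

lemma rotate_eq_Cons_cyc_after: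
  assumes "distinct t" "k < length t"
  shows "rotate k t = t ! k # cyc_after t (t ! k)"
proof -
  have "t \<noteq> []" using assms by auto
  with assms obtain r where r: "rotate k t = t ! k # r"
    using hd_rotate_conv_nth[of t k] by (cases "rotate k t") auto
  moreover have "distinct (t ! k # r)" using assms(1) r by (metis distinct_rotate)
  ultimately have "cyc_after t (t ! k) = r"
    using cyc_after_rotate[OF assms(1), of "t ! k" k] assms by simp
  with r show ?thesis by simp
qed

lemma cyc_after_swap:
  assumes "distinct t" "y \<in> set t" "cyc_after t y = s1 @ x # s2"
  shows "cyc_after t x = s2 @ y # s1"
proof -
  obtain k where "k < length t" "t ! k = y" using assms(2) by (auto simp: in_set_conv_nth)
  with assms have "rotate k t = y # s1 @ x # s2" using rotate_eq_Cons_cyc_after by metis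
  then have rot: "rotate (Suc (length s1) + k) t = x # s2 @ y # s1"
    by (simp add: rotate_rotate[symmetric] rotate_append[of "y # s1", simplified])
  have "distinct (x # s2 @ y # s1)" using assms(1) rot by (metis distinct_rotate)
  moreover have "x \<in> set t" using rot by (metis set_rotate list.set_intros(1))
  ultimately show ?thesis
    using cyc_after_rotate[OF assms(1), of x "Suc (length s1) + k"] rot by simp
qed

definition ins_after :: "'a \<Rightarrow> 'a \<Rightarrow> 'a list \<Rightarrow> 'a list" where
  "ins_after x N t = concat (map (\<lambda>y. if y = x then [x, N] else [y]) t)"

lemma ins_after_simps [simp]:
  "ins_after x N [] = []"
  "ins_after x N (y # t) = (if y = x then [x, N] else [y]) @ ins_after x N t"
  "ins_after x N (t1 @ t2) = ins_after x N t1 @ ins_after x N t2"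
  by (auto simp: ins_after_def)

lemma ins_after_notin [simp]: "x \<notin> set t \<Longrightarrow> ins_after x N t = t"
  by (induction t) auto

lemma filter_ins_after: "\<not> P N \<Longrightarrow> filter P (ins_after x N t) = filter P t"
  by (induction t) auto

lemma hd_ins_after: "t \<noteq> [] \<Longrightarrow> hd (ins_after x N t) = hd t"
  by (cases t) auto

lemma ins_after_eq_Nil_iff [simp]: "ins_after x N t = [] \<longleftrightarrow> t = []"
  by (cases t) auto

section \<open>Avoidance of the pattern in terms of cyclic continuations\<close>

text \<open>For s the cyclic continuation of a, this says that no occurrence of the pattern has a and
  hd s in the roles of 1 and 4.\<close>
definition no_1423_at :: "'a::linorder \<Rightarrow> 'a list \<Rightarrow> bool" where
  "no_1423_at a s \<longleftrightarrow>
     (s \<noteq> [] \<longrightarrow> a < hd s \<longrightarrow> sorted_wrt (>) (filter (\<lambda>z. a < z \<and> z < hd s) s))"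

definition avoids_1423_cyc :: "'a::linorder list \<Rightarrow> bool" where
  "avoids_1423_cyc t \<longleftrightarrow> (\<forall>a\<in>set t. no_1423_at a (cyc_after t a))"

lemma sorted_wrt_filter_iff_nth:
  "sorted_wrt R (filter P xs) \<longleftrightarrow>
    (\<forall>i j. i < j \<longrightarrow> j < length xs \<longrightarrow> P (xs ! i) \<longrightarrow> P (xs ! j) \<longrightarrow> R (xs ! i) (xs ! j))"
  by (induction xs) (auto simp: in_set_conv_nth nth_Cons split: nat.split)

definition has_1423_at :: "nat \<Rightarrow> 'a::linorder list \<Rightarrow> bool" where
  "has_1423_at i t \<longleftrightarrow> (\<exists>j k. Suc i < j \<and> j < k \<and> k < length t \<and>
      t ! i < t ! j \<and> t ! j < t ! k \<and> t ! k < t ! Suc i)"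

lemma contains_1423_lin_iff: "contains_1423_lin t \<longleftrightarrow> (\<exists>i. has_1423_at i t)"
  by (simp add: contains_1423_lin_def has_1423_at_def)

lemma has_1423_at_rotate: "has_1423_at i t \<Longrightarrow> has_1423_at 0 (rotate i t)"
proof -
  assume "has_1423_at i t"
  then obtain j k where jk: "Suc i < j" "j < k" "k < length t"
      "t ! i < t ! j" "t ! j < t ! k" "t ! k < t ! Suc i"
    by (auto simp: has_1423_at_def)
  then have "rotate i t ! l = t ! (i + l)" if "i + l < length t" for l
    using that by (simp add: nth_rotate add.commute)
  with jk show ?thesis
    unfolding has_1423_at_def
    by (intro exI[of _ "j - i"] exI[of _ "k - i"]) (auto simp: add.commute[of i])
qed

lemma has_1423_at_0_Cons_Cons_iff:
  "has_1423_at 0 (a # b # r) \<longleftrightarrow>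
    (\<exists>j k. j < k \<and> k < length r \<and> a < r ! j \<and> r ! j < r ! k \<and> r ! k < b)"
proof
  assume "has_1423_at 0 (a # b # r)"
  then obtain j k where jk: "1 < j" "j < k" "k < length (a # b # r)"
      "a < (a # b # r) ! j" "(a # b # r) ! j < (a # b # r) ! k" "(a # b # r) ! k < b"
    by (auto simp: has_1423_at_def)
  then obtain j' k' where "j = Suc (Suc j')" "k = Suc (Suc k')"
    using less_iff_Suc_add[of 1 j] less_iff_Suc_add[of 1 k] by auto
  with jk show "\<exists>j k. j < k \<and> k < length r \<and> a < r ! j \<and> r ! j < r ! k \<and> r ! k < b"
    by auto
next
  assume "\<exists>j k. j < k \<and> k < length r \<and> a < r ! j \<and> r ! j < r ! k \<and> r ! k < b"
  then obtain j k where "j < k" "k < length r" "a < r ! j" "r ! j < r ! k" "r ! k < b" by blast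
  then show "has_1423_at 0 (a # b # r)"
    unfolding has_1423_at_def by (intro exI[of _ "Suc (Suc j)"] exI[of _ "Suc (Suc k)"]) simp
qed

lemma has_1423_at_0_Cons_iff:
  assumes "distinct (a # s)"
  shows "has_1423_at 0 (a # s) \<longleftrightarrow> \<not> no_1423_at a s"
proof (cases s)
  case (Cons b r)
  let ?P = "\<lambda>z. a < z \<and> z < b"
  have "no_1423_at a s \<longleftrightarrow>
      (a < b \<longrightarrow> (\<forall>j k. j < k \<longrightarrow> k < length r \<longrightarrow> ?P (r ! j) \<longrightarrow> ?P (r ! k) \<longrightarrow> r ! k < r ! j))"
    using Cons by (simp add: no_1423_at_def sorted_wrt_filter_iff_nth)
  also have "\<dots> \<longleftrightarrow> \<not> (\<exists>j k. j < k \<and> k < length r \<and> a < r ! j \<and> r ! j < r ! k \<and> r ! k < b)"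
  proof
    assume sorted: "a < b \<longrightarrow> (\<forall>j k. j < k \<longrightarrow> k < length r \<longrightarrow> ?P (r ! j) \<longrightarrow> ?P (r ! k) \<longrightarrow> r ! k < r ! j)"
    show "\<not> (\<exists>j k. j < k \<and> k < length r \<and> a < r ! j \<and> r ! j < r ! k \<and> r ! k < b)"
    proof
      assume "\<exists>j k. j < k \<and> k < length r \<and> a < r ! j \<and> r ! j < r ! k \<and> r ! k < b"
      then obtain j k where jk: "j < k" "k < length r" "a < r ! j" "r ! j < r ! k" "r ! k < b" by blast
      then have "a < r ! k" "r ! j < b" "a < b" by (meson order.strict_trans)+
      with sorted jk show False by (meson order.asym)
    qed
  next
    assume no_witness: "\<not> (\<exists>j k. j < k \<and> k < length r \<and> a < r ! j \<and> r ! j < r ! k \<and> r ! k < b)"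
    show "a < b \<longrightarrow> (\<forall>j k. j < k \<longrightarrow> k < length r \<longrightarrow> ?P (r ! j) \<longrightarrow> ?P (r ! k) \<longrightarrow> r ! k < r ! j)"
    proof (intro impI allI)
      fix j k assume jk: "j < k" "k < length r" "?P (r ! j)" "?P (r ! k)"
      with assms Cons have "r ! j \<noteq> r ! k" by (simp add: nth_eq_iff_index_eq)
      with no_witness jk show "r ! k < r ! j" by (meson linorder_neqE)
    qed
  qed
  finally show ?thesis unfolding Cons has_1423_at_0_Cons_Cons_iff by blast
qed (simp add: has_1423_at_def no_1423_at_def)

lemma cyc_eq_range_rotate:
  assumes "t \<noteq> []"
  shows "cyc t = range (\<lambda>k. rotate k t)"
  unfolding cyc_def
proof (intro set_eqI iffI)
  fix r assume "r \<in> range (\<lambda>k. rotate k t)"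
  then obtain j where "r = rotate j t" by blast
  then have "r = rotate (j mod length t) t" by (simp add: rotate_conv_mod[symmetric])
  with assms show "r \<in> {rotate k t |k. k < length t}" by auto
qed auto

lemma cyc_rotate: "cyc (rotate k t) = cyc t"
proof (cases "t = []")
  case False
  have "rotate j t = rotate (j + length t * k - k) (rotate k t)" for j
  proof -
    have "rotate j t = rotate (j + length t * k) t"
      by (simp add: rotate_conv_mod[of j t] rotate_conv_mod[of "j + length t * k" t])
    also have "\<dots> = rotate (j + length t * k - k) (rotate k t)"
    proof -
      have "k \<le> j + length t * k" using False by (cases t) auto
      then show ?thesis by (simp add: rotate_rotate)
    qed
    finally show ?thesis .
  qed
  then have "range (\<lambda>j. rotate j (rotate k t)) = range (\<lambda>j. rotate j t)"
    by (auto simp: rotate_rotate)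
  with False show ?thesis by (simp add: cyc_eq_range_rotate)
qed simp

lemma self_in_cyc: "t \<noteq> [] \<Longrightarrow> t \<in> cyc t"
  unfolding cyc_def by (auto intro!: exI[of _ 0])

lemma contains_1423_cyc_iff:
  assumes "distinct t"
  shows "contains_1423 (cyc t) \<longleftrightarrow> \<not> avoids_1423_cyc t"
proof -
  have "contains_1423 (cyc t) \<longleftrightarrow> (\<exists>k<length t. has_1423_at 0 (rotate k t))"
  proof
    assume "contains_1423 (cyc t)"
    then obtain k i where ki: "has_1423_at i (rotate k t)"
      by (auto simp: contains_1423_def cyc_def contains_1423_lin_iff)
    then have "has_1423_at 0 (rotate (i + k) t)"
      using has_1423_at_rotate[OF ki] by (simp add: rotate_rotate)
    moreover have "t \<noteq> []" using ki by (auto simp: has_1423_at_def)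
    ultimately show "\<exists>k<length t. has_1423_at 0 (rotate k t)"
      by (intro exI[of _ "(i + k) mod length t"]) (simp add: rotate_conv_mod[symmetric])
  qed (auto simp: contains_1423_def cyc_def contains_1423_lin_iff)
  also have "\<dots> \<longleftrightarrow> (\<exists>k<length t. \<not> no_1423_at (t ! k) (cyc_after t (t ! k)))"
  proof -
    have "has_1423_at 0 (rotate k t) \<longleftrightarrow> \<not> no_1423_at (t ! k) (cyc_after t (t ! k))"
      if "k < length t" for k
      using has_1423_at_0_Cons_iff rotate_eq_Cons_cyc_after[OF assms that] distinct_rotate[of k t] assms
      by simp
    then show ?thesis by blast
  qed
  also have "\<dots> \<longleftrightarrow> \<not> avoids_1423_cyc t"
    by (simp add: avoids_1423_cyc_def all_set_conv_all_nth)
  finally show ?thesis .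
qed

section \<open>Inserting a new maximum\<close>

definition active :: "'a::linorder list \<Rightarrow> 'a \<Rightarrow> bool" where
  "active t x \<longleftrightarrow> sorted_wrt (>) (filter (\<lambda>z. x < z) (cyc_after t x))"

definition active_sites :: "'a::linorder list \<Rightarrow> 'a set" where
  "active_sites t = {x \<in> set t. active t x}"

lemma finite_active_sites [simp]: "finite (active_sites t)"
  by (simp add: active_sites_def)

lemma active_imp_no_1423_at: "active t x \<Longrightarrow> no_1423_at x (cyc_after t x)"
  using sorted_wrt_filter[of "(>)" "filter (\<lambda>z. x < z) (cyc_after t x)" "\<lambda>z. z < hd (cyc_after t x)"]
  by (simp add: active_def no_1423_at_def filter_filter conj_commute)

locale max_insertion =
  fixes p :: "'a::linorder list" and x N :: 'a
  assumes distinct_p: "distinct p" and x_in_p: "x \<in> set p" and less_N: "\<And>z. z \<in> set p \<Longrightarrow> z < N"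
begin

lemma N_notin_p: "N \<notin> set p"
  using less_N by blast

lemma ins_after_split:
  obtains u v where "p = u @ x # v" "ins_after x N p = u @ x # N # v"
proof -
  obtain u v where p: "p = u @ x # v" using split_list[OF x_in_p] by blast
  with distinct_p have "x \<notin> set u" "x \<notin> set v" by auto
  with p that show ?thesis by simp
qed

lemma distinct_ins_after: "distinct (ins_after x N p)"
  by (rule ins_after_split) (use distinct_p N_notin_p in auto)

lemma set_ins_after: "set (ins_after x N p) = insert N (set p)"
  by (rule ins_after_split) auto

lemma cyc_after_ins_after_other:
  assumes "a \<in> set p" "a \<noteq> x"
  shows "cyc_after (ins_after x N p) a = ins_after x N (cyc_after p a)"
proof -
  obtain u v where p: "p = u @ a # v" using split_list[OF assms(1)] by blast
  with distinct_p have "a \<notin> set u" by simp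
  moreover have "set (ins_after x N u) \<subseteq> insert N (set u)" by (induction u) auto
  ultimately have "a \<notin> set (ins_after x N u)" using N_notin_p assms by auto
  with p assms \<open>a \<notin> set u\<close> show ?thesis by (simp add: cyc_after_split)
qed

lemma cyc_after_ins_after_x: "cyc_after (ins_after x N p) x = N # cyc_after p x"
proof (rule ins_after_split)
  fix u v assume "p = u @ x # v" "ins_after x N p = u @ x # N # v"
  with distinct_p show ?thesis by (simp add: cyc_after_split)
qed

lemma cyc_after_ins_after_N: "cyc_after (ins_after x N p) N = cyc_after p x @ [x]"
proof (rule ins_after_split)
  fix u v assume uv: "p = u @ x # v" "ins_after x N p = u @ x # N # v"
  with N_notin_p have "N \<notin> set (u @ [x])" by auto
  with uv distinct_p show ?thesis
    using cyc_after_split[of N "u @ [x]" v] by (simp add: cyc_after_split)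
qed

lemma less_N_cyc_after: "a \<in> set p \<Longrightarrow> z \<in> set (cyc_after p a) \<Longrightarrow> z < N"
  using set_cyc_after[OF distinct_p] less_N by blast

lemma cyc_after_ins_after_split:
  assumes "y \<in> set p" "y \<noteq> x"
  obtains s1 s2 where "cyc_after p y = s1 @ x # s2" "cyc_after (ins_after x N p) y = s1 @ x # N # s2"
proof -
  have "x \<in> set (cyc_after p y)" using set_cyc_after[OF distinct_p] assms x_in_p by auto
  then obtain s1 s2 where s: "cyc_after p y = s1 @ x # s2" using split_list by metis
  moreover have "x \<notin> set s1" "x \<notin> set s2" using distinct_cyc_after[OF distinct_p assms(1)] s by auto
  ultimately show ?thesis using that cyc_after_ins_after_other[OF assms] by simp
qed

lemma no_1423_at_N: "no_1423_at N (cyc_after (ins_after x N p) N)"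
  using less_N_cyc_after[OF x_in_p] less_N[OF x_in_p] hd_in_set[of "cyc_after p x"]
  by (auto simp: no_1423_at_def cyc_after_ins_after_N hd_append less_imp_not_less)

lemma no_1423_at_x_iff: "no_1423_at x (cyc_after (ins_after x N p) x) \<longleftrightarrow> active p x"
proof -
  have "filter (\<lambda>z. x < z \<and> z < N) (cyc_after p x) = filter (\<lambda>z. x < z) (cyc_after p x)"
    using less_N_cyc_after[OF x_in_p] by (intro filter_cong) auto
  with less_N[OF x_in_p] show ?thesis
    by (simp add: no_1423_at_def active_def cyc_after_ins_after_x)
qed

lemma no_1423_at_other_iff:
  assumes "a \<in> set p" "a \<noteq> x"
  shows "no_1423_at a (cyc_after (ins_after x N p) a) \<longleftrightarrow> no_1423_at a (cyc_after p a)"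
proof (cases "cyc_after p a = []")
  case False
  then have "hd (cyc_after p a) < N" using less_N_cyc_after[OF assms(1)] hd_in_set by blast
  then have "filter (\<lambda>z. a < z \<and> z < hd (cyc_after p a)) (ins_after x N (cyc_after p a)) =
      filter (\<lambda>z. a < z \<and> z < hd (cyc_after p a)) (cyc_after p a)"
    by (intro filter_ins_after) (simp add: not_less less_imp_le)
  with False show ?thesis
    by (simp add: no_1423_at_def cyc_after_ins_after_other[OF assms] hd_ins_after)
qed (simp add: cyc_after_ins_after_other[OF assms])

lemma avoids_1423_cyc_ins_after_iff:
  "avoids_1423_cyc (ins_after x N p) \<longleftrightarrow> avoids_1423_cyc p \<and> active p x"
  using no_1423_at_N no_1423_at_x_iff no_1423_at_other_iff active_imp_no_1423_at x_in_p
  unfolding avoids_1423_cyc_def set_ins_after by auto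

lemma active_ins_after_N: "active (ins_after x N p) N"
  using less_N_cyc_after[OF x_in_p] less_N[OF x_in_p]
  by (auto simp: active_def cyc_after_ins_after_N filter_empty_conv less_imp_not_less)

lemma active_ins_after_x:
  assumes "active p x"
  shows "active (ins_after x N p) x"
proof -
  have "filter (\<lambda>z. x < z) (cyc_after (ins_after x N p) x) = N # filter (\<lambda>z. x < z) (cyc_after p x)"
    using less_N[OF x_in_p] by (simp add: cyc_after_ins_after_x)
  with assms less_N_cyc_after[OF x_in_p] show ?thesis by (simp add: active_def)
qed

lemma not_active_ins_after_below:
  assumes "y \<in> set p" "y < x"
  shows "\<not> active (ins_after x N p) y"
proof (rule cyc_after_ins_after_split)
  fix s1 s2 assume "cyc_after (ins_after x N p) y = s1 @ x # N # s2"
  moreover have "x < N" using less_N[OF x_in_p] .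
  ultimately have "filter (\<lambda>z. y < z) (cyc_after (ins_after x N p) y) =
      filter (\<lambda>z. y < z) s1 @ x # N # filter (\<lambda>z. y < z) s2"
    using assms(2) by simp
  with \<open>x < N\<close> show ?thesis by (auto simp: active_def sorted_wrt_append less_imp_not_less)
qed (use assms in auto)

lemma active_ins_after_above:
  assumes "active p x" "y \<in> set p" "x < y" "active p y"
  shows "active (ins_after x N p) y"
proof (rule cyc_after_ins_after_split)
  fix s1 s2 assume s: "cyc_after p y = s1 @ x # s2" "cyc_after (ins_after x N p) y = s1 @ x # N # s2"
  have "cyc_after p x = s2 @ y # s1" using cyc_after_swap[OF distinct_p assms(2) s(1)] .
  \<comment> \<open>y precedes s1 in the continuation of x, so activity of x keeps s1 below y.\<close>
  with assms(1,3) have "filter (\<lambda>z. y < z) s1 = []"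
    by (auto simp: active_def sorted_wrt_append filter_empty_conv)
  moreover have "\<forall>z\<in>set s2. z < N" using less_N_cyc_after[OF assms(2)] s(1) by auto
  moreover have "sorted_wrt (>) (filter (\<lambda>z. y < z) s2)"
    using assms(3,4) s(1) by (simp add: active_def sorted_wrt_append less_not_sym[OF assms(3)])
  ultimately have "filter (\<lambda>z. y < z) (cyc_after (ins_after x N p) y) = N # filter (\<lambda>z. y < z) s2"
    using s(2) assms(3) less_N[OF assms(2)] by simp
  with \<open>sorted_wrt (>) (filter (\<lambda>z. y < z) s2)\<close> \<open>\<forall>z\<in>set s2. z < N\<close> show ?thesis
    by (simp add: active_def)
qed (use assms in auto)

lemma active_of_active_ins_after:
  assumes "y \<in> set p" "y \<noteq> x" "active (ins_after x N p) y"
  shows "active p y"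
proof -
  have "filter (\<lambda>z. z \<noteq> N) (filter (\<lambda>z. y < z) (ins_after x N (cyc_after p y))) =
      filter (\<lambda>z. y < z) (cyc_after p y)"
    using less_N_cyc_after[OF assms(1)]
    by (auto simp: filter_filter filter_ins_after intro!: filter_cong)
  with assms show ?thesis
    using sorted_wrt_filter[of "(>)" _ "\<lambda>z. z \<noteq> N"]
    by (metis active_def cyc_after_ins_after_other)
qed

lemma active_sites_ins_after:
  assumes "active p x"
  shows "active_sites (ins_after x N p) = insert N {y \<in> active_sites p. x \<le> y}"
  using assms active_ins_after_N active_ins_after_x not_active_ins_after_below
    active_ins_after_above active_of_active_ins_after x_in_p
  unfolding active_sites_def set_ins_after
  by (auto simp: le_less) (metis linorder_neqE)

lemma card_active_sites_ins_after:
  assumes "active p x"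
  shows "card (active_sites (ins_after x N p)) = Suc (card {y \<in> active_sites p. x \<le> y})"
  using active_sites_ins_after[OF assms] N_notin_p by (simp add: active_sites_def)

end

section \<open>The generating tree\<close>

lemma removeAll_ins_after: "N \<notin> set p \<Longrightarrow> removeAll N (ins_after x N p) = p"
  by (induction p) auto

lemma ins_after_last_cyc_after_removeAll:
  assumes "distinct q" "N \<in> set q" "hd q \<noteq> N"
  shows "ins_after (last (cyc_after q N)) N (removeAll N q) = q"
proof -
  obtain w v where q: "q = w @ N # v" using split_list[OF assms(2)] by blast
  with assms(3) obtain u x where w: "w = u @ [x]" by (cases w rule: rev_cases) auto
  with q assms(1) have "cyc_after q N = v @ u @ [x]" "removeAll N q = u @ x # v"
    using cyc_after_split[of N "u @ [x]" v] by auto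
  with q w assms(1) show ?thesis by simp
qed

definition rooted_avoiders :: "nat \<Rightarrow> nat list set" where
  "rooted_avoiders n = {t \<in> perms n. hd t = 1 \<and> avoids_1423_cyc t}"

lemma finite_perms: "finite (perms n)"
proof (rule finite_subset)
  show "perms n \<subseteq> {xs. set xs \<subseteq> {1..n} \<and> length xs = n}"
    by (auto simp: perms_def dest: distinct_card)
qed (rule finite_lists_length_eq, simp)

lemma finite_rooted_avoiders: "finite (rooted_avoiders n)"
  using finite_perms by (simp add: rooted_avoiders_def)

lemma max_insertion_perms: "p \<in> perms n \<Longrightarrow> x \<in> set p \<Longrightarrow> max_insertion p x (Suc n)"
  by unfold_locales (auto simp: perms_def)

lemma ins_after_in_perms: "p \<in> perms n \<Longrightarrow> x \<in> set p \<Longrightarrow> ins_after x (Suc n) p \<in> perms (Suc n)"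
  using max_insertion.distinct_ins_after max_insertion.set_ins_after max_insertion_perms
  by (fastforce simp: perms_def atLeastAtMostSuc_conv)

lemma ins_after_in_rooted_avoiders_iff:
  assumes "p \<in> perms n" "x \<in> set p"
  shows "ins_after x (Suc n) p \<in> rooted_avoiders (Suc n) \<longleftrightarrow>
    p \<in> rooted_avoiders n \<and> x \<in> active_sites p"
proof -
  have "hd (ins_after x (Suc n) p) = hd p" using assms(2) by (auto intro: hd_ins_after)
  with assms show ?thesis
    using ins_after_in_perms max_insertion.avoids_1423_cyc_ins_after_iff[OF max_insertion_perms]
    by (auto simp: rooted_avoiders_def active_sites_def)
qed

lemma ins_after_last_cyc_after_rooted_avoiders:
  assumes "n \<ge> 1" "q \<in> rooted_avoiders (Suc n)"
  shows "ins_after (last (cyc_after q (Suc n))) (Suc n) (removeAll (Suc n) q) = q"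
  using assms by (auto simp: rooted_avoiders_def perms_def intro: ins_after_last_cyc_after_removeAll)

lemma parent_in_rooted_avoiders:
  assumes "n \<ge> 1" "q \<in> rooted_avoiders (Suc n)"
  defines "p \<equiv> removeAll (Suc n) q" and "x \<equiv> last (cyc_after q (Suc n))"
  shows "p \<in> rooted_avoiders n \<and> x \<in> active_sites p"
proof -
  have p: "p \<in> perms n"
    using assms(2) by (auto simp: p_def rooted_avoiders_def perms_def atLeastAtMostSuc_conv distinct_removeAll)
  have q_eq: "q = ins_after x (Suc n) p"
    using ins_after_last_cyc_after_rooted_avoiders[OF assms(1,2)] by (simp add: p_def x_def)
  have x: "x \<in> set p"
  proof (rule ccontr)
    assume "x \<notin> set p"
    then have "q = p" using q_eq by simp
    moreover have "Suc n \<in> set q" using assms(2) by (simp add: rooted_avoiders_def perms_def)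
    moreover have "Suc n \<notin> set p" using p by (simp add: perms_def)
    ultimately show False by simp
  qed
  show ?thesis using assms(2) q_eq ins_after_in_rooted_avoiders_iff[OF p x] by simp
qed

lemma bij_betw_ins_after_rooted_avoiders:
  assumes "n \<ge> 1"
  shows "bij_betw (\<lambda>(p, x). ins_after x (Suc n) p)
    (SIGMA p:rooted_avoiders n. active_sites p) (rooted_avoiders (Suc n))"
proof -
  let ?f = "\<lambda>(p, x). ins_after x (Suc n) p"
  \<comment> \<open>The inverse deletes n + 1 and records its cyclic predecessor.\<close>
  let ?g = "\<lambda>q. (removeAll (Suc n) q, last (cyc_after q (Suc n)))"
  let ?A = "SIGMA p:rooted_avoiders n. active_sites p"
  have "\<forall>a\<in>?A. ?g (?f a) = a"
    using max_insertion.cyc_after_ins_after_N[OF max_insertion_perms]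
      max_insertion.N_notin_p[OF max_insertion_perms]
    by (auto simp: rooted_avoiders_def active_sites_def removeAll_ins_after)
  moreover have "\<forall>q\<in>rooted_avoiders (Suc n). ?f (?g q) = q"
    using ins_after_last_cyc_after_rooted_avoiders[OF assms] by simp
  moreover have "?f ` ?A \<subseteq> rooted_avoiders (Suc n)"
    using ins_after_in_rooted_avoiders_iff by (auto simp: rooted_avoiders_def active_sites_def)
  moreover have "?g ` rooted_avoiders (Suc n) \<subseteq> ?A"
    using parent_in_rooted_avoiders[OF assms] by auto
  ultimately show ?thesis by (rule bij_betw_byWitness)
qed

lemma Av_1423_has_rooted_representative:
  assumes "n \<ge> 1" "C \<in> Av_1423 n"
  obtains t where "t \<in> rooted_avoiders n" "cyc t = C"
proof -
  obtain t where t: "t \<in> perms n" "C = cyc t" "\<not> contains_1423 (cyc t)"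
    using assms(2) by (auto simp: Av_1423_def cyc_perms_def)
  have "1 \<in> set t" using t(1) assms(1) by (simp add: perms_def)
  then obtain k where k: "k < length t" "t ! k = 1" by (auto simp: in_set_conv_nth)
  have "rotate k t \<in> perms n" using t(1) by (simp add: perms_def)
  moreover have "hd (rotate k t) = 1"
    using k hd_rotate_conv_nth[of t k] by (cases "t = []") auto
  moreover have "avoids_1423_cyc (rotate k t)"
    using t contains_1423_cyc_iff[of "rotate k t"] by (simp add: cyc_rotate perms_def)
  ultimately have "rotate k t \<in> rooted_avoiders n" by (simp add: rooted_avoiders_def)
  moreover have "cyc (rotate k t) = C" using t by (simp add: cyc_rotate)
  ultimately show ?thesis using that by blast
qed

lemma bij_betw_cyc_rooted_avoiders:
  assumes "n \<ge> 1"
  shows "bij_betw cyc (rooted_avoiders n) (Av_1423 n)"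
proof (rule bij_betw_imageI)
  show "inj_on cyc (rooted_avoiders n)"
  proof (rule inj_onI)
    fix t t' assume t: "t \<in> rooted_avoiders n" and t': "t' \<in> rooted_avoiders n" and "cyc t = cyc t'"
    moreover have "t' \<noteq> []" using t' assms by (auto simp: rooted_avoiders_def perms_def)
    ultimately have "t' \<in> cyc t" using self_in_cyc by simp
    then obtain k where k: "k < length t" "t' = rotate k t" by (auto simp: cyc_def)
    have "t \<noteq> []" using k by auto
    then have "t ! k = hd t'" using k hd_rotate_conv_nth[of t k] by simp
    also have "\<dots> = t ! 0" using t t' \<open>t \<noteq> []\<close> by (simp add: rooted_avoiders_def hd_conv_nth)
    finally have "k = 0"
      using k t \<open>t \<noteq> []\<close> nth_eq_iff_index_eq[of t k 0] by (simp add: rooted_avoiders_def perms_def)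
    with k show "t = t'" by simp
  qed
  show "cyc ` rooted_avoiders n = Av_1423 n"
  proof (intro set_eqI iffI)
    fix C assume "C \<in> cyc ` rooted_avoiders n"
    then show "C \<in> Av_1423 n"
      by (auto simp: rooted_avoiders_def Av_1423_def cyc_perms_def perms_def contains_1423_cyc_iff)
  next
    fix C assume "C \<in> Av_1423 n"
    then obtain t where "t \<in> rooted_avoiders n" "cyc t = C"
      by (rule Av_1423_has_rooted_representative[OF assms])
    then show "C \<in> cyc ` rooted_avoiders n" by blast
  qed
qed

lemma bij_betw_card_ge:
  fixes A :: "'a::linorder set"
  assumes "finite A"
  shows "bij_betw (\<lambda>x. card {y\<in>A. x \<le> y}) A {1..card A}"
proof -
  let ?r = "\<lambda>x. card {y\<in>A. x \<le> y}"
  have less: "?r b < ?r a" if "a \<in> A" "a < b" for a b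
  proof (rule psubset_card_mono)
    have "a \<notin> {y\<in>A. b \<le> y}" using that by auto
    moreover have "{y\<in>A. b \<le> y} \<subseteq> {y\<in>A. a \<le> y}"
      using that by (auto intro: less_imp_le order.strict_trans2)
    ultimately show "{y\<in>A. b \<le> y} \<subset> {y\<in>A. a \<le> y}" using that by blast
  qed (use assms in simp)
  have inj: "inj_on ?r A"
  proof (rule inj_onI)
    fix a b assume "a \<in> A" "b \<in> A" "?r a = ?r b"
    then show "a = b" using less[of a b] less[of b a] by (cases a b rule: linorder_cases) auto
  qed
  have "?r x \<in> {1..card A}" if "x \<in> A" for x
    using assms that by (auto simp: Suc_le_eq card_gt_0_iff intro!: card_mono)
  then have "?r ` A = {1..card A}"
    using inj by (intro card_subset_eq) (auto simp: card_image)
  with inj show ?thesis by (simp add: bij_betw_def)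
qed

lemma sum_rooted_avoiders_Suc:
  assumes "n \<ge> 1"
  shows "(\<Sum>q\<in>rooted_avoiders (Suc n). f (card (active_sites q))) =
    (\<Sum>p\<in>rooted_avoiders n. \<Sum>c=1..card (active_sites p). f (Suc c))"
proof -
  have "(\<Sum>q\<in>rooted_avoiders (Suc n). f (card (active_sites q))) =
      (\<Sum>(p, x)\<in>(SIGMA p:rooted_avoiders n. active_sites p). f (card (active_sites (ins_after x (Suc n) p))))"
    using sum.reindex_bij_betw[OF bij_betw_ins_after_rooted_avoiders[OF assms],
        of "\<lambda>q. f (card (active_sites q))"]
    by (simp add: case_prod_unfold)
  also have "\<dots> = (\<Sum>p\<in>rooted_avoiders n. \<Sum>x\<in>active_sites p. f (card (active_sites (ins_after x (Suc n) p))))"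
    by (rule sum.Sigma[symmetric]) (simp_all add: finite_rooted_avoiders)
  also have "\<dots> = (\<Sum>p\<in>rooted_avoiders n. \<Sum>x\<in>active_sites p. f (Suc (card {y \<in> active_sites p. x \<le> y})))"
  proof (intro sum.cong refl)
    fix p x assume "p \<in> rooted_avoiders n" "x \<in> active_sites p"
    then have "p \<in> perms n" "x \<in> set p" "active p x"
      by (simp_all add: rooted_avoiders_def active_sites_def)
    then show "f (card (active_sites (ins_after x (Suc n) p))) = f (Suc (card {y \<in> active_sites p. x \<le> y}))"
      using max_insertion.card_active_sites_ins_after[OF max_insertion_perms] by simp
  qed
  also have "\<dots> = (\<Sum>p\<in>rooted_avoiders n. \<Sum>c=1..card (active_sites p). f (Suc c))"
    by (rule sum.cong[OF refl], rule sum.reindex_bij_betw[OF bij_betw_card_ge[OF finite_active_sites]])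
  finally show ?thesis .
qed

text \<open>The number of nodes m levels below a node with k active entries.\<close>
fun tree_count :: "nat \<Rightarrow> nat \<Rightarrow> nat" where
  "tree_count 0 k = 1"
| "tree_count (Suc m) k = (\<Sum>c=1..k. tree_count m (Suc c))"

lemma card_rooted_avoiders_add:
  "n \<ge> 1 \<Longrightarrow> card (rooted_avoiders (n + m)) = (\<Sum>p\<in>rooted_avoiders n. tree_count m (card (active_sites p)))"
proof (induction m arbitrary: n)
  case (Suc m)
  then show ?case
    using Suc.IH[of "Suc n"] sum_rooted_avoiders_Suc[OF Suc.prems, of "tree_count m"] by simp
qed simp

lemma perms_1: "perms 1 = {[1]}"
proof (intro set_eqI iffI)
  fix xs assume "xs \<in> perms 1"
  then have "distinct xs" "set xs = {1}" by (simp_all add: perms_def)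
  then have "length xs = 1" using distinct_card[of xs] by simp
  then obtain a where "xs = [a]" by (cases xs) auto
  with \<open>set xs = {1}\<close> show "xs \<in> {[1]}" by simp
qed (simp add: perms_def)

lemma avoids_1423_cyc_singleton: "avoids_1423_cyc [a]"
  by (simp add: avoids_1423_cyc_def no_1423_at_def)

lemma active_sites_singleton: "active_sites [a] = {a}"
  by (auto simp: active_sites_def active_def)

lemma rooted_avoiders_1: "rooted_avoiders 1 = {[1]}"
  unfolding rooted_avoiders_def perms_1 by (auto simp: avoids_1423_cyc_singleton)

lemma card_rooted_avoiders_Suc: "card (rooted_avoiders (Suc m)) = tree_count m 1"
proof -
  have "card (rooted_avoiders (1 + m)) = (\<Sum>p\<in>rooted_avoiders 1. tree_count m (card (active_sites p)))"
    by (rule card_rooted_avoiders_add) simp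
  also have "\<dots> = tree_count m 1"
    unfolding rooted_avoiders_1 by (simp add: active_sites_singleton)
  finally show ?thesis by simp
qed

text \<open>The ballot numbers k (2m+k-1)! / (m! (m+k)!) in their reflection-principle form,
  for which the recurrence of the generating tree is Pascal's rule.\<close>
definition ballot :: "nat \<Rightarrow> nat \<Rightarrow> int" where
  "ballot m k = int ((2 * m + k - 1) choose (m + k - 1)) - int ((2 * m + k - 1) choose (m + k))"

lemma ballot_Suc_0: "ballot (Suc m) 0 = 0"
  using binomial_symmetric[of m "2 * m + 1"] by (simp add: ballot_def)

lemma ballot_Suc_Suc: "ballot (Suc m) (Suc k) = ballot (Suc m) k + ballot m (Suc (Suc k))"
  by (simp add: ballot_def numeral_2_eq_2)

lemma sum_ballot: "(\<Sum>c=1..k. ballot m (Suc c)) = ballot (Suc m) k"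
  by (induction k) (simp_all add: ballot_Suc_0 ballot_Suc_Suc)

lemma ballot_1_eq_catalan: "real_of_int (ballot m 1) = catalan m"
proof -
  have "(m + 1) * (2 * m choose (m + 1)) = 2 * m * ((2 * m - 1) choose m)"
    using binomial_absorption[of m "2 * m"] by simp
  also have "\<dots> = m * (2 * m choose m)"
    using binomial_absorb_comp[of "2 * m" m] by (simp only: mult_2 diff_add_inverse2)
  finally have "real ((m + 1) * (2 * m choose (m + 1))) = real (m * (2 * m choose m))"
    by (rule arg_cong)
  then show ?thesis
    by (simp add: ballot_def catalan_def field_simps)
qed

lemma tree_count_eq_ballot: "k \<ge> 1 \<Longrightarrow> int (tree_count m k) = ballot m k"
proof (induction m arbitrary: k)
  case 0
  then show ?case by (simp add: ballot_def)
next
  case (Suc m)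
  then show ?case by (simp add: Suc.IH sum_ballot[symmetric])
qed

theorem theorem5p9:
  fixes n :: nat
  assumes "n \<ge> 1"
  shows "real (card (Av_1423 n)) = catalan (n - 1)"
proof -
  obtain m where n: "n = Suc m" using assms by (cases n) auto
  have "card (Av_1423 n) = card (rooted_avoiders n)"
    using bij_betw_same_card[OF bij_betw_cyc_rooted_avoiders[OF assms]] by simp
  also have "\<dots> = tree_count m 1" by (simp add: n card_rooted_avoiders_Suc)
  finally have "int (card (Av_1423 n)) = ballot m 1" by (simp add: tree_count_eq_ballot)
  then have "real (card (Av_1423 n)) = real_of_int (ballot m 1)"
    using arg_cong[of _ _ real_of_int] by fastforce
  with n show ?thesis using ballot_1_eq_catalan[of m] by simp
qed

end
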